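(* Let $\mathcal B\subset\mathbb N_{\geq2}$ be finite with $2\in\mathcal B$, let $t\in\mathcal B\setminus\{2\}$, let $p\geq2$ be an integer, and let $W\subset\mathcal B^{p}$ be a non-empty finite set of words of length $p$ none of whose last letter equals $2$. Let $(m(i))_{i\geq0}$ be positive integers and put $M_k=p\sum_{i=0}^k m(i)$; assume $M_k\geq\max\{\sum_{i=0}^{k-1}M_i,\ M_{k-1}/2\}$ for all $k\geq1$. Let $\lambda>0$, put $L=\max\{\max\mathcal B-2,\ p\}$, and let $\alpha\in(2,\infty)$ satisfy \[2(\alpha-2)\log\big(\sqrt2(L+1)\big)+(\alpha-2)\lambda\leq\frac{\lambda}{2}.\] Let $y\in(0,1)\setminus\mathbb Q$ be such that its BCF digit sequence $(b_n(y))_{n\geq1}$ is an infinite concatenation of words from $W$. Let $x(y)\in(0,1)\setminus\mathbb Q$ be the number whose BCF digit sequence is obtained from $(b_n(y))_{n\geq1}$ by inserting, for every $k\geq0$, immediately after the digit $b_{M_k}(y)$, a block consisting of $\lfloor\exp(\lambda M_k)\rfloor$ copies of $2$ followed by a single digit $t$ (with all other digits of $y$ kept in order). Then $x(y)\in G(\alpha)\cap F_{\mathcal B}$.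
   Context: For $x\in\mathbb R$, the irrationality exponent $\mu(x)$ is the supremum of the set of $\mu\in\mathbb R$ such that $|x-p/q|<q^{-\mu}$ holds for infinitely many $(p,q)\in\mathbb Z\times\mathbb N$ with $|p|$ and $q$ coprime. For $\alpha>2$, $G(\alpha)=\{x\in\mathbb R\setminus\mathbb Q:\mu(x)\geq\alpha\}$. Every irrational $x$ has a unique backward continued fraction (BCF) expansion $x=b_0(x)-\cfrac{1}{b_1(x)-\cfrac{1}{b_2(x)-\cdots}}$ with $b_0(x)=\lfloor x\rfloor+1$ and integers $b_n(x)\geq2$ for $n\geq1$; conversely every sequence of integers $\geq2$ is the BCF digit sequence of a unique number in $(0,1)\setminus\mathbb Q$ (with $b_0=1$). For a finite $\mathcal B\subset\mathbb N_{\geq2}$, $F_{\mathcal B}=\{x\in(0,1)\setminus\mathbb Q: b_n(x)\in\mathcal B\text{ for all }n\geq1\}$. *)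

theory Defs
  imports Complex_Main "HOL-Library.Extended_Real"
begin

definition irr_exp :: "real \<Rightarrow> ereal" where
  "irr_exp x = Sup {ereal mu | mu. infinite {(p::int, q::nat). q > 0 \<and> coprime p (int q) \<and>
       \<bar>x - real_of_int p / real q\<bar> < real q powr (- mu)}}"

definition G :: "real \<Rightarrow> real set" where
  "G alpha = {x. x \<notin> \<rat> \<and> irr_exp x \<ge> ereal alpha}"

text \<open>Backward continued fraction: x = b0 - 1/x1, b0 = floor x + 1, x1 = 1/(b0 - x), etc.\<close>
fun bcf_orbit :: "real \<Rightarrow> nat \<Rightarrow> real" where
  "bcf_orbit x 0 = x"
| "bcf_orbit x (Suc n) = 1 / (real_of_int (\<lfloor>bcf_orbit x n\<rfloor> + 1) - bcf_orbit x n)"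

definition bcf_digit :: "real \<Rightarrow> nat \<Rightarrow> int" where
  "bcf_digit x n = \<lfloor>bcf_orbit x n\<rfloor> + 1"

definition bcf_value :: "(nat \<Rightarrow> int) \<Rightarrow> real" where
  "bcf_value c = (THE x. x \<in> {0<..<1} - \<rat> \<and> (\<forall>n\<ge>1. bcf_digit x n = c n))"

definition F :: "nat set \<Rightarrow> real set" where
  "F B = {x \<in> {0<..<1} - \<rat>. \<forall>n\<ge>1. bcf_digit x n \<in> int ` B}"

definition conc_nth :: "(nat \<Rightarrow> 'a list) \<Rightarrow> nat \<Rightarrow> 'a" where
  "conc_nth seg n = (let k = (LEAST k. n < (\<Sum>i\<le>k. length (seg i)))
                     in seg k ! (n - (\<Sum>i<k. length (seg i))))"

end

theory Submission
  imports Defs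
begin

(*
  If the BCF digits of x contain a run of r twos starting at position n, replacing all digits
  from position n on by 2 gives a rational number P/Q (the tail 2, 2, 2, ... has value 1), where Q
  is the difference of the last two convergent denominators, and |x - P/Q| < 1/(r Q^2).

  Along the digits of x(y) the convergent denominators grow at most by the factor max B per digit
  of y, by the factor t per separator, and only by the factor r + 1 along a run of r twos. Hence
  the denominator Q_k belonging to the k-th inserted run satisfies
  ln Q_k <= M_k (2 ln (sqrt 2 (L + 1)) + lambda), and the hypothesis on alpha makes the run length
  floor (exp (lambda M_k)) exceed Q_k^(alpha - 2) for large k.  The separators t >= 3 make the Q_k
  strictly increasing, so these are infinitely many distinct coprime approximations.
*)

section \<open>Backward continued fraction expansions\<close>

lemma bcf_orbit_not_rat:
  assumes "x \<notin> \<rat>"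
  shows "bcf_orbit x n \<notin> \<rat>"
proof (induction n)
  case 0
  then show ?case using assms by simp
next
  case (Suc n)
  show ?case
  proof
    assume "bcf_orbit x (Suc n) \<in> \<rat>"
    then have "1 / bcf_orbit x (Suc n) \<in> \<rat>" by (intro Rats_divide) simp_all
    then have "of_int (\<lfloor>bcf_orbit x n\<rfloor> + 1) - bcf_orbit x n \<in> \<rat>"
      by (simp del: bcf_orbit.simps add: bcf_orbit.simps(2))
    from Rats_diff[OF Rats_of_int[of "\<lfloor>bcf_orbit x n\<rfloor> + 1"] this] show False using Suc by simp
  qed
qed

lemma bcf_orbit_floor_gap:
  assumes "x \<notin> \<rat>"
  shows "0 < of_int (\<lfloor>bcf_orbit x n\<rfloor> + 1) - bcf_orbit x n"
    and "of_int (\<lfloor>bcf_orbit x n\<rfloor> + 1) - bcf_orbit x n < 1"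
proof -
  have "bcf_orbit x n \<noteq> of_int \<lfloor>bcf_orbit x n\<rfloor>"
    using bcf_orbit_not_rat[OF assms, of n] by (metis Rats_of_int)
  then show "of_int (\<lfloor>bcf_orbit x n\<rfloor> + 1) - bcf_orbit x n < 1"
    using of_int_floor_le[of "bcf_orbit x n"] by linarith
qed linarith

lemma bcf_orbit_Suc_gt_1:
  assumes "x \<notin> \<rat>"
  shows "1 < bcf_orbit x (Suc n)"
  using bcf_orbit_floor_gap[OF assms, of n] by simp

lemma bcf_orbit_eq:
  assumes "x \<notin> \<rat>"
  shows "bcf_orbit x n = bcf_digit x n - 1 / bcf_orbit x (Suc n)"
  using bcf_orbit_floor_gap(1)[OF assms, of n] by (simp add: bcf_digit_def)

lemma bcf_digit_0:
  assumes "x \<in> {0<..<1}"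
  shows "bcf_digit x 0 = 1"
  using assms by (simp add: bcf_digit_def floor_eq_iff)

lemma bcf_digit_ge_2:
  assumes "x \<notin> \<rat>" and "1 \<le> n"
  shows "2 \<le> bcf_digit x n"
proof -
  obtain k where "n = Suc k" using assms(2) by (cases n) auto
  then show ?thesis using bcf_orbit_Suc_gt_1[OF assms(1), of k] by (simp add: bcf_digit_def)
qed

lemma bcf_tails_dist_step:
  fixes d :: "nat \<Rightarrow> int" and v w :: "nat \<Rightarrow> real"
  assumes v: "\<And>n. 1 < v n" "\<And>n. v n = d n - 1 / v (Suc n)"
    and w: "\<And>n. 1 < w n" "\<And>n. w n = d n - 1 / w (Suc n)"
  shows "\<bar>v n - w n\<bar> \<le> \<bar>v (Suc n) - w (Suc n)\<bar>"
    and "3 \<le> d (Suc n) \<Longrightarrow> \<bar>v n - w n\<bar> \<le> \<bar>v (Suc n) - w (Suc n)\<bar> / 4"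
proof -
  have diff: "\<bar>v n - w n\<bar> = \<bar>v (Suc n) - w (Suc n)\<bar> / (v (Suc n) * w (Suc n))"
  proof -
    have "v n - w n = 1 / w (Suc n) - 1 / v (Suc n)" using v(2)[of n] w(2)[of n] by simp
    also have "\<dots> = (v (Suc n) - w (Suc n)) / (v (Suc n) * w (Suc n))"
      using v(1)[of "Suc n"] w(1)[of "Suc n"] by (simp add: field_simps)
    finally show ?thesis using v(1)[of "Suc n"] w(1)[of "Suc n"] by simp
  qed
  show "\<bar>v n - w n\<bar> \<le> \<bar>v (Suc n) - w (Suc n)\<bar>"
  proof -
    have "1 \<le> v (Suc n) * w (Suc n)"
      using v(1)[of "Suc n"] w(1)[of "Suc n"] mult_mono[of 1 "v (Suc n)" 1 "w (Suc n)"] by simp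
    then show ?thesis unfolding diff by (simp add: divide_le_eq mult_le_cancel_left1)
  qed
  show "\<bar>v n - w n\<bar> \<le> \<bar>v (Suc n) - w (Suc n)\<bar> / 4" if "3 \<le> d (Suc n)"
  proof -
    have "1 / v (Suc (Suc n)) < 1" "1 / w (Suc (Suc n)) < 1"
      using v(1)[of "Suc (Suc n)"] w(1)[of "Suc (Suc n)"] by simp_all
    moreover have "3 \<le> real_of_int (d (Suc n))" using that by simp
    ultimately have "2 < v (Suc n)" "2 < w (Suc n)"
      using v(2)[of "Suc n"] w(2)[of "Suc n"] by linarith+
    then have "4 \<le> v (Suc n) * w (Suc n)"
      using mult_mono[of 2 "v (Suc n)" 2 "w (Suc n)"] by simp
    then show ?thesis unfolding diff by (intro divide_left_mono) auto
  qed
qed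

lemma bcf_tail_unique:
  fixes d :: "nat \<Rightarrow> int" and v w :: "nat \<Rightarrow> real"
  assumes d3: "\<And>N. \<exists>m\<ge>N. 3 \<le> d m"
    and v: "\<And>n. 1 < v n" "\<And>n. v n = d n - 1 / v (Suc n)"
    and w: "\<And>n. 1 < w n" "\<And>n. w n = d n - 1 / w (Suc n)"
  shows "v 0 = w 0"
proof -
  note step = bcf_tails_dist_step(1)[of v d w, OF v w]
    and contract = bcf_tails_dist_step(2)[of v d w, OF v w]
  have steps: "\<bar>v n - w n\<bar> \<le> \<bar>v (n + k) - w (n + k)\<bar>" for n k
    by (induction k) (auto intro: order_trans step)
  have bound: "\<bar>v n - w n\<bar> \<le> 1" for n
  proof -
    have "0 < 1 / v (Suc n)" "1 / v (Suc n) < 1" "0 < 1 / w (Suc n)" "1 / w (Suc n) < 1"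
      using v(1)[of "Suc n"] w(1)[of "Suc n"] by simp_all
    then show ?thesis using v(2)[of n] w(2)[of n] by linarith
  qed
  have small: "\<bar>v n - w n\<bar> \<le> (1 / 4) ^ j" for j n
  proof (induction j arbitrary: n)
    case 0
    then show ?case using bound by simp
  next
    case (Suc j)
    obtain m where m: "Suc n \<le> m" "3 \<le> d (Suc m)" using d3[of "Suc (Suc n)"]
      by (metis Suc_le_D Suc_le_mono)
    have "\<bar>v n - w n\<bar> \<le> \<bar>v m - w m\<bar>" using steps[of n "m - n"] m(1) by simp
    also have "\<dots> \<le> \<bar>v (Suc m) - w (Suc m)\<bar> / 4" using contract m(2) by simp
    also have "\<dots> \<le> (1 / 4) ^ j / 4" using Suc[of "Suc m"] by simp
    finally show ?case by simp
  qed
  show ?thesis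
  proof (rule ccontr)
    assume "v 0 \<noteq> w 0"
    then obtain j where "(1 / 4 :: real) ^ j < \<bar>v 0 - w 0\<bar>"
      using real_arch_pow_inv[of "\<bar>v 0 - w 0\<bar>" "1 / 4"] by auto
    then show False using small[of 0 j] by simp
  qed
qed

text \<open>Truncated tails: the digits from position n + N on are replaced by the tail 2, 2, 2, ...
  of value 1.\<close>

fun bcf_trunc :: "(nat \<Rightarrow> int) \<Rightarrow> nat \<Rightarrow> nat \<Rightarrow> real" where
  "bcf_trunc d n 0 = 1"
| "bcf_trunc d n (Suc N) = d n - 1 / bcf_trunc d (Suc n) N"

lemma bcf_trunc_ge_1:
  assumes "\<And>n. 2 \<le> d n"
  shows "1 \<le> bcf_trunc d n N"
proof (induction N arbitrary: n)
  case (Suc N)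
  have "1 / bcf_trunc d (Suc n) N \<le> 1" using Suc[of "Suc n"] by simp
  then show ?case using assms[of n] by simp
qed simp

lemma bcf_trunc_mono:
  assumes "\<And>n. 2 \<le> d n"
  shows "bcf_trunc d n N \<le> bcf_trunc d n (Suc N)"
proof (induction N arbitrary: n)
  case 0
  then show ?case using assms[of n] by simp
next
  case (Suc N)
  have "1 / bcf_trunc d (Suc n) (Suc N) \<le> 1 / bcf_trunc d (Suc n) N"
    using Suc[of "Suc n"] bcf_trunc_ge_1[of d, OF assms, of "Suc n" N]
      bcf_trunc_ge_1[of d, OF assms, of "Suc n" "Suc N"]
    by (intro divide_left_mono) simp_all
  then show ?case by simp
qed

lemma bcf_trunc_le:
  assumes "\<And>n. 2 \<le> d n"
  shows "bcf_trunc d n N \<le> d n"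
proof (cases N)
  case (Suc N')
  have "1 \<le> bcf_trunc d (Suc n) N'" using bcf_trunc_ge_1[of d, OF assms] .
  then show ?thesis using Suc by simp
qed (use assms[of n] in simp)

lemma bcf_tail_exists:
  fixes d :: "nat \<Rightarrow> int"
  assumes d2: "\<And>n. 2 \<le> d n"
  obtains w where "\<And>n. 1 \<le> w n" and "\<And>n. w n = d n - 1 / w (Suc n)"
proof -
  have "\<exists>l. bcf_trunc d n \<longlonglongrightarrow> l" for n
  proof -
    have "incseq (bcf_trunc d n)" by (rule incseq_SucI) (rule bcf_trunc_mono[of d, OF d2])
    moreover have "\<forall>N. bcf_trunc d n N \<le> d n" using bcf_trunc_le[of d, OF d2] by blast
    ultimately obtain l where "bcf_trunc d n \<longlonglongrightarrow> l" by (rule incseq_convergent)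
    then show ?thesis by blast
  qed
  then obtain w where w: "\<And>n. bcf_trunc d n \<longlonglongrightarrow> w n" by metis
  have ge: "1 \<le> w n" for n
    using LIMSEQ_le_const[OF w] bcf_trunc_ge_1[of d, OF d2] by blast
  have "w n = d n - 1 / w (Suc n)" for n
  proof (rule LIMSEQ_unique)
    show "(\<lambda>N. bcf_trunc d n (Suc N)) \<longlonglongrightarrow> w n" using w[of n] by (rule LIMSEQ_Suc)
    have "w (Suc n) \<noteq> 0" using ge[of "Suc n"] by simp
    from tendsto_diff[OF tendsto_const tendsto_divide[OF tendsto_const w[of "Suc n"] this]]
    show "(\<lambda>N. bcf_trunc d n (Suc N)) \<longlonglongrightarrow> d n - 1 / w (Suc n)" by simp
  qed
  with ge that show ?thesis by blast
qed

lemma bcf_tail_gt_1: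
  fixes d :: "nat \<Rightarrow> int"
  assumes d2: "\<And>n. 2 \<le> d n" and d3: "\<And>N. \<exists>m\<ge>N. 3 \<le> d m"
    and w: "\<And>n. 1 \<le> w n" "\<And>n. w n = d n - 1 / w (Suc n)"
  shows "1 < w n"
proof -
  obtain m where m: "n \<le> m" "3 \<le> d m" using d3 by blast
  have step_down: "1 < w k" if "1 < w (Suc k)" for k
  proof -
    have "1 / w (Suc k) < 1" using that by simp
    moreover have "2 \<le> real_of_int (d k)" using d2[of k] by simp
    ultimately show ?thesis using w(2)[of k] by linarith
  qed
  show ?thesis
    using m(1)
  proof (induction rule: inc_induct)
    case base
    have "1 / w (Suc m) \<le> 1" using w(1)[of "Suc m"] by simp
    moreover have "3 \<le> real_of_int (d m)" using m(2) by simp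
    ultimately show ?case using w(2)[of m] by linarith
  qed (rule step_down)
qed

lemma bcf_tail_not_rat:
  fixes d :: "nat \<Rightarrow> int"
  assumes w: "\<And>n. 1 < w n" "\<And>n. w n = d n - 1 / w (Suc n)"
  shows "w 0 \<notin> \<rat>"
proof
  assume "w 0 \<in> \<rat>"
  then obtain a b :: int where ab: "0 < b" "w 0 = a / b" by (metis Rats_cases')
  text \<open>The denominators of the rational numbers \<open>w n\<close> would decrease strictly.\<close>
  have "\<exists>(a' :: int) (b' :: int). 0 < b' \<and> b' + int n \<le> b \<and> w n = a' / b'" for n
  proof (induction n)
    case 0
    then show ?case using ab by auto
  next
    case (Suc n)
    then obtain a' b' :: int where h: "0 < b'" "b' + int n \<le> b" "w n = a' / b'" by blast
    define e where "e = d n * b' - a'"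
    have frac: "d n - w n = 1 / w (Suc n)" using w(2)[of n] by simp
    have "0 < d n - w n" "d n - w n < 1" using frac w(1)[of "Suc n"] by simp_all
    moreover have e_eq: "real_of_int e = b' * (d n - w n)" using h by (simp add: e_def field_simps)
    ultimately have "0 < real_of_int e" "real_of_int e < b'"
      using h(1) by (simp_all add: mult_less_cancel_left1)
    then have "0 < e" "e < b'" by simp_all
    moreover have "1 / w (Suc n) = e / b'"
      using frac e_eq h(1) by (simp add: field_simps)
    then have "w (Suc n) = b' / e" by (metis divide_divide_eq_right div_by_1 mult_1)
    ultimately show ?case using h by (intro exI[of _ b'] exI[of _ e]) auto
  qed
  from this[of "nat b"] show False using ab by auto
qed

lemma bcf_exists:
  fixes c :: "nat \<Rightarrow> int"
  assumes c2: "\<And>n. 1 \<le> n \<Longrightarrow> 2 \<le> c n" and c3: "\<And>N. \<exists>m\<ge>N. 3 \<le> c m"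
  obtains x where "x \<in> {0<..<1} - \<rat>" and "\<And>n. 1 \<le> n \<Longrightarrow> bcf_digit x n = c n"
proof -
  define d where "d n = c (Suc n)" for n
  have d2: "2 \<le> d n" for n using c2 by (simp add: d_def)
  have d3: "\<exists>m\<ge>N. 3 \<le> d m" for N
    using c3[of "Suc N"] by (metis Suc_le_D Suc_le_mono d_def)
  obtain w where w_ge: "\<And>n. 1 \<le> w n" and w_eq: "\<And>n. w n = d n - 1 / w (Suc n)"
    using bcf_tail_exists[of d, OF d2] by blast
  have w_gt: "1 < w n" for n by (rule bcf_tail_gt_1[of d w, OF d2 d3 w_ge w_eq])
  define x where "x = 1 - 1 / w 0"
  have x01: "x \<in> {0<..<1}" using w_gt[of 0] by (simp add: x_def)
  have w0: "w 0 = 1 / (1 - x)" by (simp add: x_def)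
  have x_irr: "x \<notin> \<rat>"
  proof
    assume "x \<in> \<rat>"
    then have "1 / (1 - x) \<in> \<rat>" by (intro Rats_divide Rats_diff) auto
    then show False using bcf_tail_not_rat[of w d, OF w_gt w_eq] w0 by simp
  qed
  have floor_w: "\<lfloor>w n\<rfloor> = d n - 1" for n
  proof -
    have "0 < 1 / w (Suc n)" "1 / w (Suc n) < 1" using w_gt[of "Suc n"] by simp_all
    then show ?thesis using w_eq[of n] by (simp add: floor_eq_iff)
  qed
  have orbit: "bcf_orbit x (Suc n) = w n" for n
  proof (induction n)
    case 0
    have "\<lfloor>x\<rfloor> = 0" using x01 by (simp add: floor_eq_iff)
    then show ?case using w0 by simp
  next
    case (Suc n)
    have "bcf_orbit x (Suc (Suc n)) = 1 / (d n - w n)"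
      using Suc floor_w[of n] by (simp del: bcf_orbit.simps add: bcf_orbit.simps(2))
    also have "d n - w n = 1 / w (Suc n)" using w_eq[of n] by simp
    finally show ?case by simp
  qed
  have "bcf_digit x n = c n" if "1 \<le> n" for n
    using that orbit[of "n - 1"] floor_w[of "n - 1"] by (simp add: bcf_digit_def d_def)
  with x01 x_irr that show ?thesis by blast
qed

lemma bcf_eq_if_digits_eq:
  assumes x: "x \<in> {0<..<1} - \<rat>" and z: "z \<in> {0<..<1} - \<rat>"
    and same: "\<And>n. 1 \<le> n \<Longrightarrow> bcf_digit x n = bcf_digit z n"
    and three: "\<And>N. \<exists>m\<ge>N. 3 \<le> bcf_digit x m"
  shows "x = z"
proof -
  have x_irr: "x \<notin> \<rat>" and z_irr: "z \<notin> \<rat>" using x z by simp_all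
  define d where "d n = bcf_digit x (Suc n)" for n
  have "bcf_orbit x (Suc 0) = bcf_orbit z (Suc 0)"
  proof (rule bcf_tail_unique[of d "\<lambda>n. bcf_orbit x (Suc n)" "\<lambda>n. bcf_orbit z (Suc n)"])
    show "\<exists>m\<ge>N. 3 \<le> d m" for N
      using three[of "Suc N"] by (metis Suc_le_D Suc_le_mono d_def)
    show "1 < bcf_orbit x (Suc n)" "1 < bcf_orbit z (Suc n)" for n
      using bcf_orbit_Suc_gt_1 x_irr z_irr by blast+
    show "bcf_orbit x (Suc n) = d n - 1 / bcf_orbit x (Suc (Suc n))"
      and "bcf_orbit z (Suc n) = d n - 1 / bcf_orbit z (Suc (Suc n))" for n
      using bcf_orbit_eq[OF x_irr, of "Suc n"] bcf_orbit_eq[OF z_irr, of "Suc n"] same[of "Suc n"]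
      by (simp_all del: bcf_orbit.simps add: d_def)
  qed
  moreover have "x = 1 - 1 / bcf_orbit x (Suc 0)" and "z = 1 - 1 / bcf_orbit z (Suc 0)"
    using bcf_orbit_eq[OF x_irr, of 0] bcf_orbit_eq[OF z_irr, of 0] bcf_digit_0[of x] bcf_digit_0[of z] x z
    by (simp_all del: bcf_orbit.simps add: bcf_orbit.simps(1))
  ultimately show ?thesis by simp
qed

lemma bcf_value_digits:
  fixes c :: "nat \<Rightarrow> int"
  assumes c2: "\<And>n. 1 \<le> n \<Longrightarrow> 2 \<le> c n" and c3: "\<And>N. \<exists>m\<ge>N. 3 \<le> c m"
  shows "bcf_value c \<in> {0<..<1} - \<rat>" and "\<And>n. 1 \<le> n \<Longrightarrow> bcf_digit (bcf_value c) n = c n"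
proof -
  obtain x where x: "x \<in> {0<..<1} - \<rat>" and digits: "\<And>n. 1 \<le> n \<Longrightarrow> bcf_digit x n = c n"
    using bcf_exists[OF c2 c3] by blast
  have "bcf_value c = x"
    unfolding bcf_value_def
  proof (rule the_equality)
    fix z assume "z \<in> {0<..<1} - \<rat> \<and> (\<forall>n\<ge>1. bcf_digit z n = c n)"
    then have z: "z \<in> {0<..<1} - \<rat>" and z_digits: "\<And>n. 1 \<le> n \<Longrightarrow> bcf_digit z n = c n" by auto
    show "z = x"
    proof (rule bcf_eq_if_digits_eq[OF z x])
      show "bcf_digit z n = bcf_digit x n" if "1 \<le> n" for n using that z_digits digits by simp
      show "\<exists>m\<ge>N. 3 \<le> bcf_digit z m" for N
        using c3[of "Suc N"] z_digits by (metis Suc_leD le_trans le_add1 plus_1_eq_Suc)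
    qed
  qed (use x digits in blast)
  then show "bcf_value c \<in> {0<..<1} - \<rat>" and "\<And>n. 1 \<le> n \<Longrightarrow> bcf_digit (bcf_value c) n = c n"
    using x digits by auto
qed

section \<open>Convergents\<close>

text \<open>The convergents p_n / q_n = c 0 - 1 / (c 1 - ... - 1 / c n) are
  \<open>bcf_num c (n + 2) / bcf_den c (n + 2)\<close> (note the index shift). The fraction
  \<open>bcf_num_diff c n / bcf_den_diff c n\<close> is the value of the expansion with digits
  c 0, ..., c (n - 1), 2, 2, 2, ..., because the tail 2, 2, 2, ... has value 1.\<close>

fun bcf_num :: "(nat \<Rightarrow> int) \<Rightarrow> nat \<Rightarrow> int" where
  "bcf_num c 0 = 0"
| "bcf_num c (Suc 0) = 1"
| "bcf_num c (Suc (Suc n)) = c n * bcf_num c (Suc n) - bcf_num c n"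

fun bcf_den :: "(nat \<Rightarrow> int) \<Rightarrow> nat \<Rightarrow> int" where
  "bcf_den c 0 = -1"
| "bcf_den c (Suc 0) = 0"
| "bcf_den c (Suc (Suc n)) = c n * bcf_den c (Suc n) - bcf_den c n"

definition bcf_num_diff :: "(nat \<Rightarrow> int) \<Rightarrow> nat \<Rightarrow> int" where
  "bcf_num_diff c n = bcf_num c (Suc n) - bcf_num c n"

definition bcf_den_diff :: "(nat \<Rightarrow> int) \<Rightarrow> nat \<Rightarrow> int" where
  "bcf_den_diff c n = bcf_den c (Suc n) - bcf_den c n"

lemma bcf_convergent_identity:
  assumes x: "x \<notin> \<rat>"
  shows "x * (bcf_den (bcf_digit x) (Suc n) * bcf_orbit x n - bcf_den (bcf_digit x) n)
       = bcf_num (bcf_digit x) (Suc n) * bcf_orbit x n - bcf_num (bcf_digit x) n"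
proof (induction n)
  case 0
  then show ?case by simp
next
  case (Suc n)
  let ?c = "bcf_digit x" and ?w = "bcf_orbit x (Suc n)"
  have w: "?w \<noteq> 0" using bcf_orbit_Suc_gt_1[OF x, of n] by (simp del: bcf_orbit.simps)
  have eq: "bcf_orbit x n = ?c n - 1 / ?w" by (rule bcf_orbit_eq[OF x])
  have "bcf_den ?c (Suc (Suc n)) * ?w - bcf_den ?c (Suc n)
      = ?w * (bcf_den ?c (Suc n) * bcf_orbit x n - bcf_den ?c n)"
    and "bcf_num ?c (Suc (Suc n)) * ?w - bcf_num ?c (Suc n)
      = ?w * (bcf_num ?c (Suc n) * bcf_orbit x n - bcf_num ?c n)"
    using w by (simp_all del: bcf_orbit.simps add: eq field_simps)
  then show ?case using Suc by (metis mult.left_commute)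
qed

lemma bcf_num_den_det: "bcf_num c n * bcf_den c (Suc n) - bcf_num c (Suc n) * bcf_den c n = 1"
  by (induction n) (simp_all add: algebra_simps)

lemma coprime_bcf_num_den_diff: "coprime (bcf_num_diff c n) (bcf_den_diff c n)"
proof (rule coprimeI)
  fix g
  assume "g dvd bcf_num_diff c n" and "g dvd bcf_den_diff c n"
  then have "g dvd bcf_num_diff c n * bcf_den c n - bcf_num c n * bcf_den_diff c n" by simp
  also have "bcf_num_diff c n * bcf_den c n - bcf_num c n * bcf_den_diff c n = -1"
    using bcf_num_den_det[of c n] by (simp add: bcf_num_diff_def bcf_den_diff_def algebra_simps)
  finally show "is_unit g" by simp
qed

lemma bcf_den_diff_Suc: "bcf_den_diff c (Suc n) = bcf_den_diff c n + (c n - 2) * bcf_den c (Suc n)"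
  by (simp add: bcf_den_diff_def algebra_simps)

text \<open>The digit \<open>c 0\<close> never enters the denominators, since \<open>bcf_den c 1 = 0\<close>.\<close>

locale bcf_digit_seq =
  fixes c :: "nat \<Rightarrow> int"
  assumes digit_ge_2: "1 \<le> n \<Longrightarrow> 2 \<le> c n"
begin

lemma bcf_den_diff_ge_1_and_bcf_den_nonneg: "1 \<le> bcf_den_diff c n \<and> 0 \<le> bcf_den c (Suc n)"
proof (induction n)
  case 0
  then show ?case by (simp add: bcf_den_diff_def)
next
  case (Suc n)
  have "0 \<le> (c n - 2) * bcf_den c (Suc n)"
    using Suc.IH digit_ge_2[of n] by (cases n) simp_all
  then have "1 \<le> bcf_den_diff c (Suc n)" using Suc.IH bcf_den_diff_Suc[of c n] by simp
  moreover have "bcf_den c (Suc (Suc n)) = bcf_den c (Suc n) + bcf_den_diff c (Suc n)"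
    by (simp add: bcf_den_diff_def)
  ultimately show ?case using Suc.IH by simp
qed

lemma bcf_den_diff_ge_1: "1 \<le> bcf_den_diff c n"
  using bcf_den_diff_ge_1_and_bcf_den_nonneg by blast

lemma bcf_den_nonneg: "1 \<le> n \<Longrightarrow> 0 \<le> bcf_den c n"
  using bcf_den_diff_ge_1_and_bcf_den_nonneg[of "n - 1"] by simp

lemma bcf_den_ge: "int n \<le> bcf_den c (Suc n)"
proof (induction n)
  case (Suc n)
  then show ?case using bcf_den_diff_ge_1[of "Suc n"] by (simp add: bcf_den_diff_def)
qed simp

lemma bcf_den_diff_mono: "m \<le> n \<Longrightarrow> bcf_den_diff c m \<le> bcf_den_diff c n"
proof (rule lift_Suc_mono_le[of "bcf_den_diff c"])
  fix n
  show "bcf_den_diff c n \<le> bcf_den_diff c (Suc n)"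
    using bcf_den_diff_Suc[of c n] digit_ge_2[of n] bcf_den_nonneg[of "Suc n"] by (cases n) simp_all
qed

lemma bcf_den_diff_strict:
  assumes "1 \<le> n" and "3 \<le> c n"
  shows "bcf_den_diff c n < bcf_den_diff c (Suc n)"
proof -
  have "1 \<le> bcf_den c (Suc n)" using bcf_den_ge[of n] assms(1) by simp
  then have "1 \<le> (c n - 2) * bcf_den c (Suc n)"
    using mult_mono[of 1 "c n - 2" 1 "bcf_den c (Suc n)"] assms(2) by simp
  then show ?thesis using bcf_den_diff_Suc[of c n] by simp
qed

lemma bcf_den_Suc_Suc_le:
  assumes "1 \<le> n" and "c n \<le> K"
  shows "bcf_den c (Suc (Suc n)) \<le> K * bcf_den c (Suc n)"
proof -
  have "bcf_den c (Suc (Suc n)) \<le> c n * bcf_den c (Suc n)"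
    using bcf_den_nonneg[of n] assms(1) by simp
  also have "\<dots> \<le> K * bcf_den c (Suc n)"
    using assms(2) bcf_den_nonneg[of "Suc n"] by (intro mult_right_mono) simp_all
  finally show ?thesis .
qed

lemma bcf_den_le_pow:
  assumes "\<And>i. 1 \<le> i \<Longrightarrow> i \<le> j \<Longrightarrow> c (m + i) \<le> K"
  shows "bcf_den c (m + 2 + j) \<le> K ^ j * bcf_den c (m + 2)"
  using assms
proof (induction j)
  case (Suc j)
  have K: "c (m + Suc j) \<le> K" using Suc.prems[of "Suc j"] by simp
  have "bcf_den c (m + 2 + Suc j) = bcf_den c (Suc (Suc (m + Suc j)))" by simp
  also have "\<dots> \<le> K * bcf_den c (m + 2 + j)"
    using bcf_den_Suc_Suc_le[OF _ K] by simp
  also have "\<dots> \<le> K * (K ^ j * bcf_den c (m + 2))"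
    using Suc digit_ge_2[of "m + Suc j"] K by (intro mult_left_mono) simp_all
  finally show ?case by (simp add: algebra_simps)
qed simp

text \<open>Along a run of twos the differences of consecutive denominators stay constant.\<close>

lemma bcf_den_run_of_twos:
  assumes "\<And>i. 1 \<le> i \<Longrightarrow> i \<le> r \<Longrightarrow> c (m + i) = 2"
  shows "bcf_den c (m + 2 + r) \<le> (int r + 1) * bcf_den c (m + 2)"
proof -
  have diff: "bcf_den_diff c (m + 1 + i) = bcf_den_diff c (m + 1)" if "i \<le> r" for i
    using that
  proof (induction i)
    case (Suc i)
    then show ?case using assms[of "Suc i"] bcf_den_diff_Suc[of c "m + 1 + i"] by simp
  qed simp
  have den: "bcf_den c (m + 2 + i) = bcf_den c (m + 2) + int i * bcf_den_diff c (m + 1)"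
    if "i \<le> r" for i
    using that
  proof (induction i)
    case (Suc i)
    have "bcf_den c (m + 2 + Suc i) = bcf_den c (m + 2 + i) + bcf_den_diff c (m + 2 + i)"
      by (simp add: bcf_den_diff_def)
    then show ?case using Suc diff[of "Suc i"] by (simp add: algebra_simps)
  qed simp
  have "bcf_den_diff c (m + 1) \<le> bcf_den c (m + 2)"
    using bcf_den_nonneg[of "m + 1"] by (simp add: bcf_den_diff_def)
  then have "int r * bcf_den_diff c (m + 1) \<le> int r * bcf_den c (m + 2)"
    by (intro mult_left_mono) simp_all
  then show ?thesis using den[of r] by (simp add: algebra_simps)
qed

lemma bcf_den_segment:
  assumes block: "\<And>i. 1 \<le> i \<Longrightarrow> i \<le> d \<Longrightarrow> c (m + i) \<le> K"
    and run: "\<And>i. 1 \<le> i \<Longrightarrow> i \<le> r \<Longrightarrow> c (m + d + i) = 2"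
    and last: "c (m + d + r + 1) \<le> T"
  shows "bcf_den c (m + d + r + 3) \<le> K ^ d * (T * (int r + 1)) * bcf_den c (m + 2)"
proof -
  have T: "0 \<le> T" using last digit_ge_2[of "m + d + r + 1"] by simp
  have "bcf_den c (m + d + r + 3) = bcf_den c (Suc (Suc (m + d + r + 1)))"
    by (simp add: numeral_3_eq_3)
  also have "\<dots> \<le> T * bcf_den c (m + d + 2 + r)"
    using bcf_den_Suc_Suc_le[OF _ last] by (simp add: add.commute add.left_commute)
  also have "\<dots> \<le> T * ((int r + 1) * bcf_den c (m + d + 2))"
    using bcf_den_run_of_twos[of r "m + d"] run T by (intro mult_left_mono) simp_all
  also have "bcf_den c (m + d + 2) \<le> K ^ d * bcf_den c (m + 2)"
    using bcf_den_le_pow[of d m K] block by (simp add: add.commute add.left_commute)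
  then have "T * ((int r + 1) * bcf_den c (m + d + 2)) \<le> T * ((int r + 1) * (K ^ d * bcf_den c (m + 2)))"
    using T by (intro mult_left_mono) simp_all
  finally show ?thesis by (simp add: algebra_simps)
qed

end

lemma bcf_digit_seq_bcf_digit: "x \<notin> \<rat> \<Longrightarrow> bcf_digit_seq (bcf_digit x)"
  by unfold_locales (rule bcf_digit_ge_2)

section \<open>Good approximations from runs of twos\<close>

lemma bcf_approx_error:
  assumes x: "x \<notin> \<rat>" and n: "1 \<le> n"
  shows "\<bar>x - bcf_num_diff (bcf_digit x) n / bcf_den_diff (bcf_digit x) n\<bar>
       \<le> (bcf_orbit x n - 1) / bcf_den_diff (bcf_digit x) n ^ 2"
proof -
  define c where "c = bcf_digit x"
  interpret bcf_digit_seq c unfolding c_def using x by (rule bcf_digit_seq_bcf_digit)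
  define w where "w = bcf_orbit x n"
  define P where "P = bcf_num_diff c n"
  define Q where "Q = bcf_den_diff c n"
  define D where "D = bcf_den c (Suc n) * w - bcf_den c n"
  have w: "1 < w" using bcf_orbit_Suc_gt_1[OF x, of "n - 1"] n by (simp add: w_def)
  have Q: "1 \<le> Q" using bcf_den_diff_ge_1 by (simp add: Q_def)
  have "0 \<le> bcf_den c (Suc n)" using bcf_den_nonneg by simp
  then have DQ: "Q \<le> D"
    using w mult_left_mono[of 1 w "real_of_int (bcf_den c (Suc n))"]
    by (simp add: D_def Q_def bcf_den_diff_def)
  have "x * D = bcf_num c (Suc n) * w - bcf_num c n"
    using bcf_convergent_identity[OF x] by (simp add: c_def D_def w_def)
  moreover have D: "D \<noteq> 0" and "real_of_int Q \<noteq> 0" using Q DQ by linarith+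
  ultimately have x_eq: "x = (bcf_num c (Suc n) * w - bcf_num c n) / D"
    by (simp add: eq_divide_eq)
  have "x - P / Q = ((bcf_num c (Suc n) * w - bcf_num c n) * Q - P * D) / (D * Q)"
    unfolding x_eq using D \<open>real_of_int Q \<noteq> 0\<close> by (simp add: field_simps)
  also have "(bcf_num c (Suc n) * w - bcf_num c n) * Q - P * D
           = (w - 1) * (bcf_num c n * bcf_den c (Suc n) - bcf_num c (Suc n) * bcf_den c n)"
    by (simp add: P_def Q_def D_def bcf_num_diff_def bcf_den_diff_def algebra_simps)
  finally have "x - P / Q = (w - 1) / (D * Q)"
    using bcf_num_den_det[of c n] by simp
  moreover have "(w - 1) / (D * Q) \<le> (w - 1) / Q ^ 2"
    using w Q DQ by (intro divide_left_mono) (simp_all add: power2_eq_square mult_right_mono)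
  ultimately show ?thesis
    using w Q DQ by (simp add: c_def w_def P_def Q_def)
qed

lemma bcf_orbit_run_of_twos:
  assumes x: "x \<notin> \<rat>" and n: "1 \<le> n" and twos: "\<And>i. i < r \<Longrightarrow> bcf_digit x (n + i) = 2"
  shows "real r < 1 / (bcf_orbit x n - 1)"
proof -
  have gt_1: "1 < bcf_orbit x k" if "1 \<le> k" for k
    using bcf_orbit_Suc_gt_1[OF x, of "k - 1"] that by simp
  have "1 / (bcf_orbit x n - 1) = r + 1 / (bcf_orbit x (n + r) - 1)"
    using twos
  proof (induction r)
    case (Suc r)
    let ?w = "bcf_orbit x (Suc (n + r))"
    have w: "1 < ?w" using gt_1[of "Suc (n + r)"] by (simp del: bcf_orbit.simps)
    have "bcf_orbit x (n + r) = 2 - 1 / ?w"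
      using bcf_orbit_eq[OF x, of "n + r"] Suc.prems[of r] by (simp del: bcf_orbit.simps)
    then have "bcf_orbit x (n + r) - 1 = (?w - 1) / ?w"
      using w by (simp del: bcf_orbit.simps add: field_simps)
    then have "1 / (bcf_orbit x (n + r) - 1) = ?w / (?w - 1)"
      by (simp del: bcf_orbit.simps)
    also have "\<dots> = 1 + 1 / (?w - 1)"
      using w by (simp del: bcf_orbit.simps add: field_simps)
    finally have "1 / (bcf_orbit x (n + r) - 1) = 1 + 1 / (?w - 1)" .
    then show ?case using Suc by (simp del: bcf_orbit.simps)
  qed simp
  moreover have "0 < 1 / (bcf_orbit x (n + r) - 1)" using gt_1[of "n + r"] n by simp
  ultimately show ?thesis by simp
qed

lemma bcf_approx_run_of_twos:
  fixes r :: nat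
  assumes x: "x \<notin> \<rat>" and n: "1 \<le> n" and r: "0 < r"
    and twos: "\<And>i. i < r \<Longrightarrow> bcf_digit x (n + i) = 2"
  shows "\<bar>x - bcf_num_diff (bcf_digit x) n / bcf_den_diff (bcf_digit x) n\<bar>
       < 1 / (r * bcf_den_diff (bcf_digit x) n ^ 2)"
proof -
  interpret bcf_digit_seq "bcf_digit x" using x by (rule bcf_digit_seq_bcf_digit)
  have Q: "0 < real_of_int (bcf_den_diff (bcf_digit x) n) ^ 2"
    using bcf_den_diff_ge_1[of n] by simp
  have "1 < bcf_orbit x n" using bcf_orbit_Suc_gt_1[OF x, of "n - 1"] n by simp
  then have "bcf_orbit x n - 1 < 1 / r"
    using bcf_orbit_run_of_twos[OF x n twos] r by (simp add: field_simps)
  then have "(bcf_orbit x n - 1) / bcf_den_diff (bcf_digit x) n ^ 2 < 1 / (r * bcf_den_diff (bcf_digit x) n ^ 2)"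
    using Q by (simp add: divide_strict_right_mono flip: divide_divide_eq_left)
  with bcf_approx_error[OF x n] show ?thesis by simp
qed

lemma irr_exp_ge_of_good_approximations:
  fixes x alpha :: real and p :: "nat \<Rightarrow> int" and q :: "nat \<Rightarrow> nat"
  assumes q: "strict_mono q" and coprime: "\<And>k. coprime (p k) (int (q k))"
    and close: "\<forall>\<^sub>F k in sequentially. \<bar>x - p k / q k\<bar> < q k powr (- alpha)"
  shows "ereal alpha \<le> irr_exp x"
proof -
  define A where "A = {(p::int, q::nat). 0 < q \<and> coprime p (int q) \<and>
       \<bar>x - real_of_int p / real q\<bar> < real q powr (- alpha)}"
  obtain k0 where k0: "\<And>k. k0 \<le> k \<Longrightarrow> \<bar>x - p k / q k\<bar> < q k powr (- alpha)"
    using close by (auto simp: eventually_sequentially)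
  have "0 < q k" if "1 \<le> k" for k
    using strict_monoD[OF q, of 0 k] that by simp
  then have "(\<lambda>k. (p k, q k)) ` {Suc k0..} \<subseteq> A"
    using k0 coprime by (auto simp: A_def)
  moreover have "inj_on (\<lambda>k. (p k, q k)) {Suc k0..}"
    using strict_mono_eq[OF q] by (auto intro: inj_onI)
  then have "infinite ((\<lambda>k. (p k, q k)) ` {Suc k0..})"
    using finite_imageD infinite_Ici by blast
  ultimately have "infinite A" using finite_subset by blast
  then show ?thesis
    unfolding irr_exp_def A_def by (intro Sup_upper) blast
qed

lemma irr_exp_ge_of_runs_of_twos:
  fixes x alpha :: real and n r :: "nat \<Rightarrow> nat"
  assumes x: "x \<notin> \<rat>" and n_pos: "\<And>k. 1 \<le> n k"
    and twos: "\<And>k i. i < r k \<Longrightarrow> bcf_digit x (n k + i) = 2"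
    and three: "\<And>k. \<exists>j. n k \<le> j \<and> j < n (Suc k) \<and> 3 \<le> bcf_digit x j"
    and long: "\<forall>\<^sub>F k in sequentially.
                 real_of_int (bcf_den_diff (bcf_digit x) (n k)) powr (alpha - 2) < real (r k)"
  shows "ereal alpha \<le> irr_exp x"
proof -
  interpret bcf_digit_seq "bcf_digit x" using x by (rule bcf_digit_seq_bcf_digit)
  define P where "P k = bcf_num_diff (bcf_digit x) (n k)" for k
  define Q where "Q k = bcf_den_diff (bcf_digit x) (n k)" for k
  have Q_ge_1: "1 \<le> Q k" for k using bcf_den_diff_ge_1 by (simp add: Q_def)
  have Q_mono: "Q k < Q (Suc k)" for k
  proof -
    obtain j where j: "n k \<le> j" "j < n (Suc k)" "3 \<le> bcf_digit x j" using three by blast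
    have "Q k \<le> bcf_den_diff (bcf_digit x) j" using bcf_den_diff_mono j(1) by (simp add: Q_def)
    also have "\<dots> < bcf_den_diff (bcf_digit x) (Suc j)"
      using bcf_den_diff_strict j n_pos[of k] by simp
    also have "\<dots> \<le> Q (Suc k)" using bcf_den_diff_mono j(2) by (simp add: Q_def)
    finally show ?thesis .
  qed
  have "strict_mono (\<lambda>k. nat (Q k))"
    unfolding strict_mono_Suc_iff using Q_mono Q_ge_1 by (meson nat_less_eq_zless order_trans zero_le_one)
  moreover have "coprime (P k) (int (nat (Q k)))" for k
    using coprime_bcf_num_den_diff Q_ge_1[of k] by (simp add: P_def Q_def)
  moreover have "\<forall>\<^sub>F k in sequentially. \<bar>x - P k / nat (Q k)\<bar> < nat (Q k) powr (- alpha)"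
    using long
  proof eventually_elim
    case (elim k)
    have Q: "1 \<le> real_of_int (Q k)" using Q_ge_1[of k] by simp
    have Qa: "0 < real_of_int (Q k) powr (alpha - 2)" using Q by simp
    have r: "0 < r k" using elim Qa unfolding Q_def by linarith
    have "\<bar>x - P k / Q k\<bar> < 1 / (r k * Q k ^ 2)"
      using bcf_approx_run_of_twos[OF x n_pos r twos] by (simp add: P_def Q_def)
    also have "\<dots> < 1 / (Q k powr (alpha - 2) * Q k ^ 2)"
      using elim Qa Q r by (intro divide_strict_left_mono mult_strict_right_mono) (simp_all add: Q_def)
    also have "\<dots> = Q k powr (- alpha)"
      using Q by (simp add: powr_diff powr_minus divide_inverse powr_realpow)
    finally show ?case using Q_ge_1[of k] by simp
  qed
  ultimately show ?thesis by (rule irr_exp_ge_of_good_approximations)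
qed

section \<open>Inserting runs of twos\<close>

lemma conc_nth_at:
  assumes "j < length (seg k)"
  shows "conc_nth seg ((\<Sum>i<k. length (seg i)) + j) = seg k ! j"
proof -
  let ?n = "(\<Sum>i<k. length (seg i)) + j"
  have "(LEAST k'. ?n < (\<Sum>i\<le>k'. length (seg i))) = k"
  proof (rule Least_equality)
    show "?n < (\<Sum>i\<le>k. length (seg i))"
      using assms by (simp add: lessThan_Suc_atMost[symmetric])
  next
    fix k' assume "?n < (\<Sum>i\<le>k'. length (seg i))"
    moreover have "(\<Sum>i\<le>k'. length (seg i)) \<le> (\<Sum>i<k. length (seg i))" if "k' < k"
      using that by (intro sum_mono2) auto
    ultimately show "k \<le> k'" by force
  qed
  then show ?thesis unfolding conc_nth_def Let_def by simp
qed

lemma conc_nth_mem: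
  fixes seg :: "nat \<Rightarrow> 'a list"
  assumes nonempty: "\<And>i. seg i \<noteq> []" and subset: "\<And>i. set (seg i) \<subseteq> A"
  shows "conc_nth seg n \<in> A"
proof -
  define S where "S k = (\<Sum>i<k. length (seg i))" for k
  have S_Suc: "S (Suc k) = S k + length (seg k)" for k by (simp add: S_def)
  have S_ge: "k \<le> S k" for k
  proof (induction k)
    case (Suc k)
    have "0 < length (seg k)" using nonempty[of k] by simp
    then show ?case unfolding S_Suc using Suc.IH by linarith
  qed (simp add: S_def)
  have "n < S (Suc n)" using S_ge[of "Suc n"] by simp
  then obtain k where k: "n < S (Suc k)" "\<And>k'. k' < k \<Longrightarrow> \<not> n < S (Suc k')"
    using exists_least_iff[of "\<lambda>k. n < S (Suc k)"] by blast
  have "S k \<le> n"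
  proof (cases k)
    case (Suc k')
    then show ?thesis using k(2)[of k'] by simp
  qed (simp add: S_def)
  then have "conc_nth seg n = seg k ! (n - S k)"
    using conc_nth_at[of "n - S k" seg k] k(1) by (simp add: S_def S_Suc)
  moreover have "n - S k < length (seg k)" using k(1) \<open>S k \<le> n\<close> by (simp add: S_Suc)
  ultimately show ?thesis using subset[of k] nth_mem by fastforce
qed

lemma sum_length_consecutive_blocks:
  fixes M :: "nat \<Rightarrow> nat"
  assumes "mono M"
  shows "(\<Sum>i\<le>k. length [(if i = 0 then 0 else M (i - 1)) + 1 ..< M i + 1]) = M k"
proof (induction k)
  case (Suc k)
  then show ?case using monoD[OF assms, of k "Suc k"] by simp
qed simp

text \<open>The digits of x(y): u k is the k-th block of digits of y and r k the length of the k-th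
  inserted run. Digits are counted from 1, so \<open>digit (start k + 1)\<close> is the first digit of
  segment k.\<close>

locale run_insertion =
  fixes u :: "nat \<Rightarrow> nat list" and r :: "nat \<Rightarrow> nat" and t :: nat
begin

definition segment :: "nat \<Rightarrow> nat list" where
  "segment k = u k @ replicate (r k) 2 @ [t]"

definition start :: "nat \<Rightarrow> nat" where
  "start k = (\<Sum>i<k. length (segment i))"

definition digit :: "nat \<Rightarrow> int" where
  "digit n = int (conc_nth segment (n - 1))"

lemma start_Suc: "start (Suc k) = start k + length (u k) + r k + 1"
  by (simp add: start_def segment_def)

lemma le_start: "k \<le> start k"
proof (induction k)
  case 0
  then show ?case by (simp add: start_def)
qed (simp add: start_Suc)

lemma digit_segment:
  assumes "j < length (segment k)"
  shows "digit (start k + 1 + j) = int (segment k ! j)"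
  using conc_nth_at[of j segment k, OF assms] by (simp add: digit_def start_def)

lemma digit_run:
  assumes "i < r k"
  shows "digit (start k + length (u k) + 1 + i) = 2"
  using digit_segment[of "length (u k) + i" k] assms by (simp add: segment_def nth_append add.assoc)

lemma digit_separator: "digit (start (Suc k)) = int t"
  using digit_segment[of "length (u k) + r k" k]
  by (simp add: segment_def nth_append start_Suc add.assoc)

lemma digit_mem: "digit n \<in> int ` ({2, t} \<union> (\<Union>k. set (u k)))"
  unfolding digit_def by (intro imageI conc_nth_mem) (auto simp: segment_def)

lemma bcf_den_start_le:
  assumes "bcf_digit_seq c" and c_digit: "\<And>n. 1 \<le> n \<Longrightarrow> c n = digit n"
    and c_le: "\<And>n. 1 \<le> n \<Longrightarrow> c n \<le> int K"
  shows "bcf_den c (start k + 2) \<le> int K ^ (\<Sum>i<k. length (u i)) * (\<Prod>i<k. int t * (int (r i) + 1))"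
proof (induction k)
  case 0
  then show ?case by (simp add: start_def numeral_2_eq_2)
next
  case (Suc k)
  have "bcf_den c (start (Suc k) + 2) = bcf_den c (start k + length (u k) + r k + 3)"
    by (simp add: start_Suc numeral_3_eq_3 del: bcf_den.simps)
  also have "\<dots> \<le> int K ^ length (u k) * (int t * (int (r k) + 1)) * bcf_den c (start k + 2)"
  proof (rule bcf_digit_seq.bcf_den_segment[OF assms(1)])
    show "c (start k + i) \<le> int K" if "1 \<le> i" for i using c_le that by simp
    show "c (start k + length (u k) + i) = 2" if "1 \<le> i" "i \<le> r k" for i
      using c_digit digit_run[of "i - 1" k] that by simp
    show "c (start k + length (u k) + r k + 1) \<le> int t"
      using c_digit digit_separator[of k] by (simp add: start_Suc)
  qed
  also have "\<dots> \<le> int K ^ length (u k) * (int t * (int (r k) + 1))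
                  * (int K ^ (\<Sum>i<k. length (u i)) * (\<Prod>i<k. int t * (int (r i) + 1)))"
    using Suc by (intro mult_left_mono) simp_all
  also have "\<dots> = int K ^ (\<Sum>i<Suc k. length (u i)) * (\<Prod>i<Suc k. int t * (int (r i) + 1))"
    by (simp add: power_add algebra_simps)
  finally show ?case .
qed

lemma irr_exp_ge:
  assumes x: "x \<notin> \<rat>" and x_digit: "\<And>n. 1 \<le> n \<Longrightarrow> bcf_digit x n = digit n"
    and digit_le: "\<And>n. 1 \<le> n \<Longrightarrow> digit n \<le> int K" and t: "3 \<le> t" and alpha: "2 \<le> alpha"
    and long: "\<forall>\<^sub>F k in sequentially.
      (real K ^ (\<Sum>i\<le>k. length (u i)) * (\<Prod>i<k. real t * (real (r i) + 1))) powr (alpha - 2) < real (r k)"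
  shows "ereal alpha \<le> irr_exp x"
proof (rule irr_exp_ge_of_runs_of_twos[OF x])
  let ?c = "bcf_digit x" and ?n = "\<lambda>k. start k + length (u k) + 1"
  interpret bcf_digit_seq ?c using x by (rule bcf_digit_seq_bcf_digit)
  show "1 \<le> ?n k" for k by simp
  show "?c (?n k + i) = 2" if "i < r k" for k i
    using x_digit digit_run[OF that] by simp
  show "\<exists>j. ?n k \<le> j \<and> j < ?n (Suc k) \<and> 3 \<le> ?c j" for k
    using x_digit[of "start (Suc k)"] digit_separator[of k] t le_start[of "Suc k"]
    by (intro exI[of _ "start (Suc k)"]) (simp add: start_Suc)
  have den_le: "bcf_den_diff ?c (?n k) \<le> int K ^ (\<Sum>i\<le>k. length (u i)) * (\<Prod>i<k. int t * (int (r i) + 1))" for k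
  proof -
    have "bcf_den_diff ?c (?n k) \<le> bcf_den ?c (start k + 2 + length (u k))"
      using bcf_den_nonneg[of "?n k"] by (simp add: bcf_den_diff_def algebra_simps)
    also have "\<dots> \<le> int K ^ length (u k) * bcf_den ?c (start k + 2)"
      using x_digit digit_le by (intro bcf_den_le_pow) simp
    also have "\<dots> \<le> int K ^ length (u k) * (int K ^ (\<Sum>i<k. length (u i)) * (\<Prod>i<k. int t * (int (r i) + 1)))"
      using bcf_den_start_le[OF bcf_digit_seq_axioms] x_digit digit_le by (intro mult_left_mono) simp_all
    finally show ?thesis by (simp add: lessThan_Suc_atMost[symmetric] power_add algebra_simps)
  qed
  have "real_of_int (bcf_den_diff ?c (?n k))
      \<le> real K ^ (\<Sum>i\<le>k. length (u i)) * (\<Prod>i<k. real t * (real (r i) + 1))" for k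
    using den_le[of k] by (simp flip: of_int_le_iff[where 'a=real])
  then have powr_le: "real_of_int (bcf_den_diff ?c (?n k)) powr (alpha - 2)
      \<le> (real K ^ (\<Sum>i\<le>k. length (u i)) * (\<Prod>i<k. real t * (real (r i) + 1))) powr (alpha - 2)" for k
    using bcf_den_diff_ge_1[of "?n k"] alpha by (intro powr_mono2) simp_all
  show "\<forall>\<^sub>F k in sequentially. real_of_int (bcf_den_diff ?c (?n k)) powr (alpha - 2) < real (r k)"
    using long by eventually_elim (rule order.strict_trans1[OF powr_le])
qed

lemma bcf_value_digit_in_G_F:
  assumes B_fin: "finite B" and B_ge_2: "\<forall>b\<in>B. 2 \<le> b" and digit_B: "\<And>n. digit n \<in> int ` B"
    and t: "3 \<le> t" and alpha: "2 \<le> alpha"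
    and long: "\<forall>\<^sub>F k in sequentially.
      (real (Max B) ^ (\<Sum>i\<le>k. length (u i)) * (\<Prod>i<k. real t * (real (r i) + 1))) powr (alpha - 2)
        < real (r k)"
  shows "bcf_value digit \<in> G alpha \<inter> F B"
proof -
  have digit_ge_2: "2 \<le> digit n" and digit_le: "digit n \<le> int (Max B)" for n
    using digit_B[of n] B_fin B_ge_2 by auto
  have "\<exists>m\<ge>N. 3 \<le> digit m" for N
    using digit_separator[of N] le_start[of "Suc N"] t by (intro exI[of _ "start (Suc N)"]) simp
  then have x: "bcf_value digit \<in> {0<..<1} - \<rat>"
    and x_digit: "\<And>n. 1 \<le> n \<Longrightarrow> bcf_digit (bcf_value digit) n = digit n"
    using bcf_value_digits[of digit] digit_ge_2 by blast+
  have "ereal alpha \<le> irr_exp (bcf_value digit)"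
    using x by (intro irr_exp_ge[OF _ x_digit digit_le t alpha long]) simp
  then show ?thesis using x x_digit digit_B by (simp add: G_def F_def)
qed

end

section \<open>Growth estimates\<close>

lemma exp_half_lt_nat_floor_exp:
  fixes z :: real
  assumes "2 * ln 2 < z"
  shows "exp (z / 2) < real (nat \<lfloor>exp z\<rfloor>)"
proof -
  define e where "e = exp (z / 2)"
  have "exp (ln 2) < e" unfolding e_def using assms by (subst exp_less_cancel_iff) linarith
  then have e: "2 < e" by simp
  have "2 * 1 < e * (e - 1)" using e by (intro mult_strict_mono) simp_all
  then have "e < e * e - 1" by (simp add: algebra_simps)
  also have "e * e = exp z" by (simp add: e_def flip: exp_add)
  also have "exp z - 1 < real (nat \<lfloor>exp z\<rfloor>)"
    using floor_correct[of "exp z"] by (simp add: of_nat_nat)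
  finally show ?thesis by (simp add: e_def)
qed

lemma ln_max_digit_le:
  fixes K L :: nat
  assumes "K \<le> L + 2" and "2 \<le> L" and "1 \<le> K"
  shows "ln (real K) + ln (2 * real K) / 2 \<le> 2 * ln (sqrt 2 * (real L + 1))"
proof -
  define l where "l = real L + 1"
  have l: "3 \<le> l" using assms(2) by (simp add: l_def)
  have "real K ^ 3 \<le> ((4 / 3) * l) ^ 3"
    using assms(1) l by (intro power_mono) (simp_all add: l_def)
  also have "\<dots> = 64 / 27 * l ^ 3" by (simp add: power_mult_distrib power_divide)
  also have "\<dots> \<le> 2 * l * l ^ 3" using l by (intro mult_right_mono) simp_all
  also have "2 * l * l ^ 3 = 2 * l ^ 4" by (simp add: eval_nat_numeral)
  finally have cube: "real K ^ 3 \<le> 2 * l ^ 4" .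
  have K: "0 < real K" using assms(3) by simp
  have "ln (real K ^ 3) \<le> ln (2 * l ^ 4)" using cube K l by (subst ln_le_cancel_iff) simp_all
  then have "3 * ln (real K) \<le> ln 2 + 4 * ln l" using K l by (simp add: ln_mult ln_realpow)
  then show ?thesis
    using K by (simp add: ln_mult ln_sqrt l_def) argo
qed

lemma ln_run_product_le:
  fixes M r :: "nat \<Rightarrow> nat" and K t L k :: nat and lambda :: real
  assumes k: "2 * k \<le> M k" and M_sum: "(\<Sum>i<k. M i) \<le> M k"
    and r: "\<And>i. real (r i) \<le> exp (lambda * M i)"
    and t: "2 \<le> t" "t \<le> K" and K: "K \<le> L + 2" and L: "2 \<le> L" and lambda: "0 < lambda"
  shows "ln (real K ^ M k * (\<Prod>i<k. real t * (real (r i) + 1)))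
       \<le> M k * (2 * ln (sqrt 2 * (real L + 1)) + lambda)"
proof -
  have K_pos: "0 < real K" using t by simp
  have "(\<Prod>i<k. real t * (real (r i) + 1)) \<le> (\<Prod>i<k. 2 * real t * exp (lambda * M i))"
  proof (rule prod_mono)
    fix i
    have "1 \<le> exp (lambda * M i)" using lambda by simp
    then have "real (r i) + 1 \<le> 2 * exp (lambda * M i)" using r[of i] by linarith
    then show "0 \<le> real t * (real (r i) + 1) \<and> real t * (real (r i) + 1) \<le> 2 * real t * exp (lambda * M i)"
      using mult_left_mono[of "real (r i) + 1" "2 * exp (lambda * M i)" "real t"] by simp
  qed
  also have "\<dots> = (2 * real t) ^ k * exp (lambda * (\<Sum>i<k. M i))"
    by (simp add: prod.distrib exp_sum sum_distrib_left)
  also have "\<dots> \<le> (2 * real t) ^ k * exp (lambda * M k)"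
    using M_sum lambda by (intro mult_left_mono) (simp_all flip: of_nat_sum of_nat_le_iff)
  finally have prod_le: "(\<Prod>i<k. real t * (real (r i) + 1)) \<le> (2 * real t) ^ k * exp (lambda * M k)" .
  have prod_pos: "0 < (\<Prod>i<k. real t * (real (r i) + 1))"
    using t by (intro prod_pos) simp
  have "ln (real K ^ M k * (\<Prod>i<k. real t * (real (r i) + 1)))
      \<le> ln (real K ^ M k * ((2 * real t) ^ k * exp (lambda * M k)))"
    using prod_le prod_pos K_pos by simp
  also have "\<dots> = M k * ln (real K) + k * ln (2 * real t) + lambda * M k"
    using K_pos t by (simp add: ln_mult ln_realpow distrib_left)
  also have "k * ln (2 * real t) \<le> M k * (ln (2 * real K) / 2)"
  proof -
    have "ln (2 * real t) \<le> ln (2 * real K)" using t by simp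
    then have "k * ln (2 * real t) \<le> k * ln (2 * real K)" by (intro mult_left_mono) simp_all
    also have "\<dots> \<le> (M k / 2) * ln (2 * real K)" using k K_pos by (intro mult_right_mono) simp_all
    finally show ?thesis by simp
  qed
  finally have "ln (real K ^ M k * (\<Prod>i<k. real t * (real (r i) + 1)))
      \<le> M k * (ln (real K) + ln (2 * real K) / 2 + lambda)"
    by (simp add: algebra_simps)
  also have "\<dots> \<le> M k * (2 * ln (sqrt 2 * (real L + 1)) + lambda)"
    using ln_max_digit_le[OF K L] t by (intro mult_left_mono) simp_all
  finally show ?thesis .
qed

lemma eventually_run_exceeds_powr:
  fixes M r :: "nat \<Rightarrow> nat" and K t L :: nat and lambda alpha :: real
  assumes M_ge: "\<And>k. 2 * k + 2 \<le> M k" and M_sum: "\<And>k. (\<Sum>i<k. M i) \<le> M k"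
    and r: "\<And>k. r k = nat \<lfloor>exp (lambda * M k)\<rfloor>"
    and t: "2 \<le> t" "t \<le> K" and K: "K \<le> L + 2" and L: "2 \<le> L"
    and lambda: "0 < lambda" and alpha: "2 \<le> alpha"
    and alpha_lambda: "2 * (alpha - 2) * ln (sqrt 2 * (real L + 1)) + (alpha - 2) * lambda \<le> lambda / 2"
  shows "\<forall>\<^sub>F k in sequentially. (real K ^ M k * (\<Prod>i<k. real t * (real (r i) + 1))) powr (alpha - 2) < r k"
proof -
  obtain k0 :: nat where k0: "ln 2 / lambda < k0" using reals_Archimedean2 by blast
  show ?thesis unfolding eventually_sequentially
  proof (intro exI allI impI)
    fix k assume "k0 \<le> k"
    define Q where "Q = real K ^ M k * (\<Prod>i<k. real t * (real (r i) + 1))"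
    have Q: "0 < Q" unfolding Q_def using t by (intro mult_pos_pos prod_pos) simp_all
    have "real (r i) \<le> exp (lambda * M i)" for i by (simp add: r of_nat_nat)
    then have "(alpha - 2) * ln Q \<le> (alpha - 2) * (M k * (2 * ln (sqrt 2 * (real L + 1)) + lambda))"
      using ln_run_product_le[of k M r lambda t K L] M_ge[of k] M_sum t K L lambda alpha
      by (intro mult_left_mono) (simp_all add: Q_def)
    also have "\<dots> \<le> lambda * M k / 2"
      using mult_left_mono[OF alpha_lambda, of "M k"] by (simp add: algebra_simps)
    finally have "Q powr (alpha - 2) \<le> exp (lambda * M k / 2)"
      using Q by (simp add: powr_def mult.commute)
    also have "\<dots> < r k"
      unfolding r
    proof (rule exp_half_lt_nat_floor_exp)
      have "ln 2 < lambda * k0" using k0 lambda by (simp add: field_simps)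
      also have "\<dots> \<le> lambda * k" using \<open>k0 \<le> k\<close> lambda by simp
      finally have "ln 2 < lambda * k" .
      moreover have "lambda * (2 * k + 2) \<le> lambda * M k"
        using M_ge[of k] lambda by (intro mult_left_mono) (simp_all flip: of_nat_le_iff)
      ultimately show "2 * ln 2 < lambda * M k" using lambda by (simp add: algebra_simps)
    qed
    finally show "(real K ^ M k * (\<Prod>i<k. real t * (real (r i) + 1))) powr (alpha - 2) < r k"
      by (simp add: Q_def)
  qed
qed

theorem lemma3p1:
  fixes B :: "nat set" and t p :: nat and W :: "nat list set"
    and m :: "nat \<Rightarrow> nat" and M :: "nat \<Rightarrow> nat"
    and lambda alpha y :: real and L :: nat
  assumes B_fin: "finite B" and B_ge2: "\<forall>b\<in>B. b \<ge> 2" and two_B: "2 \<in> B"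
    and t_B: "t \<in> B" and t_ne: "t \<noteq> 2"
    and p_ge: "p \<ge> 2"
    and W_fin: "finite W" and W_ne: "W \<noteq> {}"
    and W_words: "\<forall>w\<in>W. length w = p \<and> set w \<subseteq> B \<and> last w \<noteq> 2"
    and m_pos: "\<forall>i. m i > 0"
    and M_def: "\<forall>k. M k = p * (\<Sum>i\<le>k. m i)"
    and M_growth: "\<forall>k\<ge>1. real (M k) \<ge> real (\<Sum>i<k. M i) \<and> real (M k) \<ge> real (M (k - 1)) / 2"
    and lambda_pos: "lambda > 0"
    and L_def: "L = max (Max B - 2) p"
    and alpha_gt: "alpha > 2"
    and alpha_ineq: "2 * (alpha - 2) * ln (sqrt 2 * (real L + 1)) + (alpha - 2) * lambda \<le> lambda / 2"
    and y_irr: "y \<in> {0<..<1} - \<rat>"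
    and y_words: "\<exists>w. (\<forall>i. w i \<in> W) \<and> (\<forall>n\<ge>1. bcf_digit y n = int (conc_nth w (n - 1)))"
  shows "bcf_value (\<lambda>n. int (conc_nth
            (\<lambda>k. map (\<lambda>j. nat (bcf_digit y j))
                     [(if k = 0 then 0 else M (k - 1)) + 1 ..< M k + 1]
                  @ replicate (nat \<lfloor>exp (lambda * real (M k))\<rfloor>) 2 @ [t])
            (n - 1)))
         \<in> G alpha \<inter> F B"
proof -
  define u where "u k = map (\<lambda>j. nat (bcf_digit y j)) [(if k = 0 then 0 else M (k - 1)) + 1 ..< M k + 1]" for k
  define r where "r k = nat \<lfloor>exp (lambda * real (M k))\<rfloor>" for k
  interpret run_insertion u r t .
  obtain w where w_W: "\<And>i. w i \<in> W" and y_w: "\<forall>n\<ge>1. bcf_digit y n = int (conc_nth w (n - 1))"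
    using y_words by blast
  have "conc_nth w n \<in> B" for n
  proof (rule conc_nth_mem)
    show "w i \<noteq> []" and "set (w i) \<subseteq> B" for i using W_words w_W[of i] p_ge by auto
  qed
  then have digit_B: "digit n \<in> int ` B" for n
    using digit_mem[of n] y_w two_B t_B by (auto simp: u_def)
  have M_ge: "2 * k + 2 \<le> M k" for k
  proof -
    have "k + 1 \<le> (\<Sum>i\<le>k. m i)" using m_pos sum_mono[of "{..k}" "\<lambda>_. 1" m] by (simp add: Suc_le_eq)
    then show ?thesis using M_def p_ge mult_le_mono[of 2 p "k + 1"] by simp
  qed
  have M_sum: "(\<Sum>i<k. M i) \<le> M k" for k
  proof (cases k)
    case (Suc j)
    then have "real (\<Sum>i<k. M i) \<le> real (M k)" using M_growth[rule_format, of k] by simp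
    then show ?thesis by (simp only: of_nat_le_iff)
  qed simp
  have "mono M" using M_def by (intro monoI) (simp add: sum_mono2)
  have t: "3 \<le> t" using B_ge2 t_B t_ne by fastforce
  moreover have "t \<le> Max B" "Max B \<le> L + 2" "2 \<le> L" using B_fin t_B L_def p_ge by auto
  ultimately have "\<forall>\<^sub>F k in sequentially.
      (real (Max B) ^ M k * (\<Prod>i<k. real t * (real (r i) + 1))) powr (alpha - 2) < real (r k)"
    using lambda_pos alpha_gt alpha_ineq
    by (intro eventually_run_exceeds_powr[OF M_ge M_sum r_def]) simp_all
  then have long: "\<forall>\<^sub>F k in sequentially.
      (real (Max B) ^ (\<Sum>i\<le>k. length (u i)) * (\<Prod>i<k. real t * (real (r i) + 1))) powr (alpha - 2)
        < real (r k)"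
    by (simp only: u_def length_map sum_length_consecutive_blocks[OF \<open>mono M\<close>])
  have "bcf_value digit \<in> G alpha \<inter> F B"
    using alpha_gt by (intro bcf_value_digit_in_G_F[OF B_fin B_ge2 digit_B t _ long]) simp
  then show ?thesis
    unfolding digit_def[abs_def] segment_def[abs_def] u_def r_def .
qed

end
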